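(* Let $\underline{t}$ and $\underline{u}$ be increment arrays of the same size $s$ for $n$ agents with $\underline{t}\approx\underline{u}$. Then \[\bigcup_{i=1}^{n}\{C(i,\underline{t})\}=\bigcup_{i=1}^{n}\{C(i,\underline{u})\},\] i.e.\ the set of coalitions generated by $\underline{t}$ from all starting agents equals the set generated by $\underline{u}$ from all starting agents.
   Context: Agent identifiers are $\{1,\ldots,n\}$, arithmetic on identifiers is modulo $n$ with representatives in $\{1,\ldots,n\}$ (a value $0$ is replaced by $n$). An increment array (IA) of size $s$ ($1\le s\le n$) for $n$ agents is a tuple $\underline{t}=\langle t_0,\ldots,t_{s-1}\rangle$ of non-negative integers with $\sum t_i=n-s$. Cumulative increments: $\varphi_1=0$, $\varphi_i=\sum_{k=0}^{i-2}(t_k+1)$ for $2\le i\le s+1$. The coalition generated from $x$ is $C(x,\underline{t})=\{x\}\cup\bigcup_{i=2}^{s}\{(x+\varphi_i)\bmod n\}$ (residues in $\{1,\ldots,n\}$). Two IAs of the same size are equivalent, $\underline{t}\approx\underline{u}$, if $\underline{u}$ is a circular shift of $\underline{t}$: there is $0\le k\le s-1$ with $\langle u_0,\ldots,u_{s-1}\rangle=\langle t_k,\ldots,t_{s-1},t_0,\ldots,t_{k-1}\rangle$. *)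

theory Defs
  imports Main
begin

definition is_IA :: "nat \<Rightarrow> nat \<Rightarrow> nat list \<Rightarrow> bool" where
  "is_IA n s t \<longleftrightarrow> 1 \<le> s \<and> s \<le> n \<and> length t = s \<and> sum_list t + s = n"

definition phi :: "nat list \<Rightarrow> nat \<Rightarrow> nat" where
  "phi t i = (\<Sum>k<i - 1. t ! k + 1)"

definition modrep :: "nat \<Rightarrow> nat \<Rightarrow> nat" where
  "modrep n a = (if a mod n = 0 then n else a mod n)"

definition coalition :: "nat \<Rightarrow> nat \<Rightarrow> nat list \<Rightarrow> nat set" where
  "coalition n x t = {x} \<union> (\<Union>i\<in>{2..length t}. {modrep n (x + phi t i)})"

definition IA_equiv :: "nat list \<Rightarrow> nat list \<Rightarrow> bool" where
  "IA_equiv t u \<longleftrightarrow> length u = length t \<and>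
     (\<exists>k. k \<le> length t - 1 \<and> u = drop k t @ take k t)"

end

theory Submission
  imports Defs
begin

(* Writing S j for the j-th prefix sum of map Suc t, the coalition C(x,t) is the set of residues
   x + S j (j < s).  If u is t rotated by k, then S_u j + S k and S ((k + j) mod s) differ by a
   multiple of S s = n, so C(x + S k, u) = C(x, t).  As x + S k runs through all residues when x
   does, both families of coalitions coincide. *)

lemma modrep_mod: "modrep n a mod n = a mod n"
  by (cases "n = 0") (simp_all add: modrep_def)

lemma modrep_cong: "a mod n = b mod n \<Longrightarrow> modrep n a = modrep n b"
  by (simp add: modrep_def)

lemma modrep_add_left: "modrep n (modrep n a + b) = modrep n (a + b)"
  by (rule modrep_cong) (metis modrep_mod mod_add_left_eq)

lemma modrep_in_atLeastAtMost: "0 < n \<Longrightarrow> modrep n a \<in> {1..n}"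
  by (auto simp: modrep_def)

lemma modrep_id: "x \<in> {1..n} \<Longrightarrow> modrep n x = x"
  by (cases "x = n") (auto simp: modrep_def)

lemma mod_add_left_cancel_nat: "((k::nat) + i) mod n = (k + j) mod n \<longleftrightarrow> i mod n = j mod n"
  by (auto simp: nat_mod_eq_iff)

lemma image_modrep_add:
  assumes "0 < n"
  shows "(\<lambda>x. modrep n (x + c)) ` {1..n} = {1..n}"
proof (rule endo_inj_surj)
  show "(\<lambda>x. modrep n (x + c)) ` {1..n} \<subseteq> {1..n}"
    using assms modrep_in_atLeastAtMost by blast
  show "inj_on (\<lambda>x. modrep n (x + c)) {1..n}"
  proof (rule inj_onI)
    fix x y assume x: "x \<in> {1..n}" and y: "y \<in> {1..n}"
      and eq: "modrep n (x + c) = modrep n (y + c)"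
    then have "(x + c) mod n = (y + c) mod n" by (metis modrep_mod)
    then have "x mod n = y mod n" by (simp add: add.commute[of _ c] mod_add_left_cancel_nat)
    then show "x = y" using modrep_cong modrep_id x y by metis
  qed
qed simp

lemma image_add_mod_lessThan:
  fixes k s :: nat
  assumes "0 < s"
  shows "(\<lambda>j. (k + j) mod s) ` {..<s} = {..<s}"
proof (rule endo_inj_surj)
  show "inj_on (\<lambda>j. (k + j) mod s) {..<s}"
  proof (rule inj_onI)
    fix i j assume ij: "i \<in> {..<s}" "j \<in> {..<s}" and eq: "(k + i) mod s = (k + j) mod s"
    have "i mod s = j mod s"
      using eq by (rule mod_add_left_cancel_nat[THEN iffD1])
    with ij show "i = j" by simp
  qed
qed (use assms in auto)

lemma sum_list_take_rotate_mod:
  fixes L :: "nat list"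
  assumes "k < length L" "j < length L"
  shows "(sum_list (take k L) + sum_list (take j (rotate k L))) mod sum_list L
       = sum_list (take ((k + j) mod length L) L) mod sum_list L"
proof -
  have rot: "rotate k L = drop k L @ take k L"
    using assms(1) by (simp add: rotate_drop_take)
  show ?thesis
  proof (cases "k + j < length L")
    case True
    then have "take k L @ take j (rotate k L) = take (k + j) L"
      by (simp add: rot take_add)
    then show ?thesis using True by (metis sum_list_append mod_less)
  next
    case False
    let ?m = "k + j - length L"
    have "?m \<le> k"
      using assms by simp
    then have "take j (rotate k L) = drop k L @ take ?m L"
      using False assms by (simp add: rot min_def ac_simps)
    then have "sum_list (take k L) + sum_list (take j (rotate k L)) = sum_list L + sum_list (take ?m L)"
      by (metis add.assoc append_take_drop_id sum_list_append)
    moreover have "(k + j) mod length L = ?m"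
      using False assms by (simp add: le_mod_geq)
    ultimately show ?thesis by simp
  qed
qed

lemma coalition_eq_image:
  assumes "x \<in> {1..n}" "t \<noteq> []"
  shows "coalition n x t = (\<lambda>j. modrep n (x + sum_list (take j (map Suc t)))) ` {..<length t}"
proof -
  let ?g = "\<lambda>j. modrep n (x + sum_list (take j (map Suc t)))"
  have phi: "phi t i = sum_list (take (i - 1) (map Suc t))" if "i - 1 \<le> length t" for i
    using that by (simp add: phi_def sum_list_sum_nth atLeast0LessThan min_def)
  have idx: "{..<length t} = insert 0 ((\<lambda>i. i - 1) ` {2..length t})"
  proof (rule set_eqI)
    fix j show "j \<in> {..<length t} \<longleftrightarrow> j \<in> insert 0 ((\<lambda>i. i - 1) ` {2..length t})"
      using assms(2) by (cases j) (auto intro!: image_eqI[where x = "j + 1"])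
  qed
  have "coalition n x t = {x} \<union> (\<lambda>i. modrep n (x + phi t i)) ` {2..length t}"
    unfolding coalition_def by auto
  also have "(\<lambda>i. modrep n (x + phi t i)) ` {2..length t} = (\<lambda>i. ?g (i - 1)) ` {2..length t}"
    by (rule image_cong) (auto simp: phi)
  also have "\<dots> = ?g ` ((\<lambda>i. i - 1) ` {2..length t})"
    by (simp add: image_image)
  also have "{x} = {?g 0}"
    using assms(1) by (simp add: modrep_id)
  finally show ?thesis
    unfolding idx by simp
qed

lemma coalition_rotate:
  assumes x: "x \<in> {1..n}" and k: "k < length t" and total: "sum_list (map Suc t) = n"
  shows "coalition n (modrep n (x + sum_list (take k (map Suc t)))) (rotate k t) = coalition n x t"
proof -
  define L where "L = map Suc t"
  define P where "P = sum_list (take k L)"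
  let ?s = "length t"
  have t: "t \<noteq> []" "rotate k t \<noteq> []" and lL: "length L = ?s"
    using k by (auto simp: L_def)
  have n: "0 < n"
    using t total by (cases t) auto
  have shift: "modrep n (modrep n (x + P) + sum_list (take j (map Suc (rotate k t))))
      = modrep n (x + sum_list (take ((k + j) mod ?s) L))" if "j < ?s" for j
  proof -
    have "(P + sum_list (take j (rotate k L))) mod n = sum_list (take ((k + j) mod ?s) L) mod n"
      using sum_list_take_rotate_mod[of k L j] k that lL total
      unfolding P_def L_def by simp
    then have "(x + P + sum_list (take j (rotate k L))) mod n
        = (x + sum_list (take ((k + j) mod ?s) L)) mod n"
      by (metis add.assoc mod_add_right_eq)
    then show ?thesis
      unfolding modrep_add_left L_def rotate_map by (rule modrep_cong)
  qed
  have "coalition n (modrep n (x + P)) (rotate k t)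
      = (\<lambda>j. modrep n (modrep n (x + P) + sum_list (take j (map Suc (rotate k t))))) ` {..<?s}"
    using coalition_eq_image[OF modrep_in_atLeastAtMost[OF n] t(2)] by simp
  also have "\<dots> = (\<lambda>j. modrep n (x + sum_list (take j L))) ` ((\<lambda>j. (k + j) mod ?s) ` {..<?s})"
    unfolding image_image by (rule image_cong) (simp_all add: shift)
  also have "\<dots> = coalition n x t"
    using coalition_eq_image[OF x t(1)] t(1) by (simp add: image_add_mod_lessThan L_def)
  finally show ?thesis
    unfolding P_def L_def .
qed

theorem lemma3:
  fixes n s :: nat and t u :: "nat list"
  assumes "is_IA n s t" and "is_IA n s u" and "IA_equiv t u"
  shows "(\<Union>i\<in>{1..n}. {coalition n i t}) = (\<Union>i\<in>{1..n}. {coalition n i u})"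
proof -
  have total: "sum_list (map Suc t) = n" and n: "0 < n"
    using assms(1) by (auto simp: is_IA_def sum_list_Suc)
  obtain k where "k \<le> length t - 1" and u_shift: "u = drop k t @ take k t"
    using assms(3) by (auto simp: IA_equiv_def)
  then have k: "k < length t"
    using assms(1) by (auto simp: is_IA_def)
  then have u: "u = rotate k t"
    by (simp add: u_shift rotate_drop_take)
  define P where "P = sum_list (take k (map Suc t))"
  have "(\<Union>i\<in>{1..n}. {coalition n i u}) = (\<lambda>i. coalition n i u) ` ((\<lambda>x. modrep n (x + P)) ` {1..n})"
    by (simp only: UNION_singleton_eq_range image_modrep_add[OF n])
  also have "\<dots> = (\<lambda>x. coalition n x t) ` {1..n}"
    unfolding image_image u P_def by (rule image_cong) (simp_all add: coalition_rotate k total)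
  finally show ?thesis
    by (simp only: UNION_singleton_eq_range)
qed

end
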